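(* Let $\mathcal{A},\widetilde{\mathcal{A}}$ be finite alphabets, $\pi:\mathcal{A}\to\widetilde{\mathcal{A}}$ a map, $D\geq1$, $\mathcal{F}\subseteq\mathcal{A}^{[\![1,D]\!]^2}$, $R\geq D$, and $M\subseteq\mathcal{A}^{[\![1,R]\!]^2}$ the set of locally $\mathcal{F}$-admissible patterns of size $R$. Assume that every $w\in M$ is vertically aligned after projection: $\pi(w(i,j))=\pi(w(i,j'))$ for all $i,j,j'\in[\![1,R]\!]$. Let $\mu$ be an ergodic shift-invariant probability measure with $\mu(\Sigma^2(\mathcal{A})\setminus[M])\leq\epsilon$ for some $\epsilon\in[0,1/2]$. Let $\widetilde{\mathcal{G}}=\{\widetilde G_a:a\in\widetilde{\mathcal{A}}\}$ with $\widetilde G_a=\{x:\pi(x(0))=a\}$ and $\mathcal{U}=\{[M],\Sigma^2(\mathcal{A})\setminus[M]\}$. Then (1) $\limsup_{n\to\infty}\frac{1}{n^2}H\big(\mathcal{U}^{[\![0,n-R]\!]^2},\mu\big)\leq H(\epsilon)$; (2) $\limsup_{n\to\infty}\frac{1}{n^2}H\big(\widetilde{\mathcal{G}}^{[\![1,n]\!]^2}\mid\mathcal{U}^{[\![0,n-R]\!]^2},\mu\big)\leq\big(\frac{8}{R}+\epsilon\big)\ln(\mathrm{card}(\widetilde{\mathcal{A}}))$, where $H(\epsilon)=-\epsilon\ln\epsilon-(1-\epsilon)\ln(1-\epsilon)$ (with $H(0)=0$).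
   Context: A pattern $w\in\mathcal{A}^{[\![1,R]\!]^2}$ is locally $\mathcal{F}$-admissible if $(\sigma^u w)|_{[\![1,D]\!]^2}\notin\mathcal{F}$ for all $u\in[\![0,R-D]\!]^2$, where $\sigma^u(w)(v)=w(u+v)$. $[M]=\{x\in\mathcal{A}^{\mathbb{Z}^2}:x|_{[\![1,R]\!]^2}\in M\}$. For a partition $\mathcal{P}$ and finite $S\subseteq\mathbb{Z}^2$, $\mathcal{P}^S=\bigvee_{u\in S}\sigma^{-u}\mathcal{P}$; $H(\mathcal{P},\mu)=-\sum_{P}\mu(P)\ln\mu(P)$ and $H(\mathcal{P}\mid\mathcal{Q},\mu)$ is the conditional entropy. *)

theory Defs
  imports "HOL-Probability.Probability"
begin

type_synonym 'a config = "int \<times> int \<Rightarrow> 'a"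

definition box2 :: "int \<Rightarrow> int \<Rightarrow> (int \<times> int) set" where
  "box2 a b = {a..b} \<times> {a..b}"

definition vadd :: "int \<times> int \<Rightarrow> int \<times> int \<Rightarrow> int \<times> int" where
  "vadd u v = (fst u + fst v, snd u + snd v)"

definition shift :: "int \<times> int \<Rightarrow> 'a config \<Rightarrow> 'a config" where
  "shift u x = (\<lambda>v. x (vadd u v))"

definition full_shift :: "'a config measure" where
  "full_shift = PiM UNIV (\<lambda>_. count_space UNIV)"

definition patterns :: "nat \<Rightarrow> 'a config set" where
  "patterns R = PiE (box2 1 (int R)) (\<lambda>_. UNIV)"

definition locally_admissible :: "'a config set \<Rightarrow> nat \<Rightarrow> nat \<Rightarrow> 'a config \<Rightarrow> bool" where
  "locally_admissible F D R w \<longleftrightarrow> w \<in> patterns R \<and>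
     (\<forall>u \<in> box2 0 (int R - int D). restrict (shift u w) (box2 1 (int D)) \<notin> F)"

definition cyl :: "nat \<Rightarrow> 'a config set \<Rightarrow> 'a config set" where
  "cyl R M = {x. restrict x (box2 1 (int R)) \<in> M}"

definition shift_invariant :: "'a config measure \<Rightarrow> bool" where
  "shift_invariant \<mu> \<longleftrightarrow> (\<forall>u. shift u \<in> \<mu> \<rightarrow>\<^sub>M \<mu> \<and>
      (\<forall>A \<in> sets \<mu>. emeasure \<mu> (shift u -` A \<inter> space \<mu>) = emeasure \<mu> A))"

definition ergodic :: "'a config measure \<Rightarrow> bool" where
  "ergodic \<mu> \<longleftrightarrow> (\<forall>A \<in> sets \<mu>. (\<forall>u. shift u -` A \<inter> space \<mu> = A) \<longrightarrow>
      measure \<mu> A = 0 \<or> measure \<mu> A = 1)"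

text \<open>A finite partition is represented by a labelling function f; its cells are
  the nonempty fibres f^{-1}(y).\<close>
definition part_entropy :: "'x measure \<Rightarrow> ('x \<Rightarrow> 'l) \<Rightarrow> real" where
  "part_entropy \<mu> f = - (\<Sum>y \<in> f ` space \<mu>.
      measure \<mu> (f -` {y} \<inter> space \<mu>) * ln (measure \<mu> (f -` {y} \<inter> space \<mu>)))"

definition cond_part_entropy :: "'x measure \<Rightarrow> ('x \<Rightarrow> 'l) \<Rightarrow> ('x \<Rightarrow> 'k) \<Rightarrow> real" where
  "cond_part_entropy \<mu> f g = - (\<Sum>z \<in> g ` space \<mu>. \<Sum>y \<in> f ` space \<mu>.
      measure \<mu> (f -` {y} \<inter> g -` {z} \<inter> space \<mu>) *
      ln (measure \<mu> (f -` {y} \<inter> g -` {z} \<inter> space \<mu>) / measure \<mu> (g -` {z} \<inter> space \<mu>)))"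

text \<open>Join P^S = join over u in S of sigma^{-u} P: label of x is (f(sigma^u x))_{u in S}.\<close>
definition join_part :: "('a config \<Rightarrow> 'l) \<Rightarrow> (int \<times> int) set \<Rightarrow> 'a config \<Rightarrow> (int \<times> int \<Rightarrow> 'l)" where
  "join_part f S x = restrict (\<lambda>u. f (shift u x)) S"

definition bin_entropy :: "real \<Rightarrow> real" where
  "bin_entropy e = (if e = 0 then 0 else - e * ln e - (1 - e) * ln (1 - e))"

end

theory Submission
  imports Defs
begin

text \<open>
  Both bounds hold for every \<open>n\<close>, not only in the limit.
  The partition \<open>\<U>\<^sup>S\<close>, \<open>S = [0, n - R]\<^sup>2\<close>, is the join of \<open>|S| \<le> n\<^sup>2\<close> shifted copies of the
  two-set partition \<open>\<U>\<close>; entropy is subadditive under joins (Gibbs' inequality against the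
  product of the marginals), and by shift invariance every copy has entropy
  \<open>H(\<mu>([M]\<^sup>c)) \<le> H(\<epsilon>)\<close>, as \<open>H\<close> increases on \<open>[0, 1/2]\<close>.
  For the conditional entropy, fix a cell \<open>z\<close> of \<open>\<U>\<^sup>S\<close> and tile \<open>[1, n]\<^sup>2\<close> by \<open>R \<times> R\<close> blocks with
  corners in \<open>(R\<int>)\<^sup>2\<close>. In a block whose corner lies in \<open>[M]\<close> the projected pattern does not depend
  on the second coordinate, so it is determined by the bottom row of the block. Hence the projected
  \<open>n \<times> n\<close> patterns in the cell are determined by at most \<open>n\<^sup>2/R + R\<^sup>2 b(z) + 2Rn\<close> sites, where
  \<open>b(z)\<close> counts the blocks whose corner is not in \<open>[M]\<close>, and by shift invariance the expected
  value of \<open>b\<close> is at most \<open>(n/R)\<^sup>2 \<epsilon>\<close>. Finally \<open>2Rn \<le> 7n\<^sup>2/R\<close> once \<open>n \<ge> R\<^sup>2\<close>.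
\<close>

section \<open>Entropy of finite partitions\<close>

lemma gibbs_inequality:
  fixes p q :: "'y \<Rightarrow> real"
  assumes "finite Y" "\<And>y. y \<in> Y \<Longrightarrow> 0 \<le> p y" "\<And>y. y \<in> Y \<Longrightarrow> 0 \<le> q y"
    and "\<And>y. y \<in> Y \<Longrightarrow> 0 < p y \<Longrightarrow> 0 < q y" and "sum q Y \<le> sum p Y"
  shows "- (\<Sum>y\<in>Y. p y * ln (p y)) \<le> - (\<Sum>y\<in>Y. p y * ln (q y))"
proof -
  have "p y * ln (q y) - p y * ln (p y) \<le> q y - p y" if y: "y \<in> Y" for y
  proof (cases "p y = 0")
    case True
    then show ?thesis using assms(3) y by simp
  next
    case False
    then have p: "p y > 0" using assms(2) y by force
    then have q: "q y > 0" using assms(4) y by blast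
    have "p y * ln (q y / p y) \<le> p y * (q y / p y - 1)"
      using p q by (intro mult_left_mono ln_le_minus_one) auto
    then show ?thesis using p q by (simp add: ln_div right_diff_distrib)
  qed
  then have "(\<Sum>y\<in>Y. p y * ln (q y) - p y * ln (p y)) \<le> (\<Sum>y\<in>Y. q y - p y)"
    by (rule sum_mono)
  then show ?thesis using assms(5) by (simp add: sum_subtractf)
qed

lemma entropy_le_ln_card:
  fixes p :: "'y \<Rightarrow> real"
  assumes Y: "finite Y" "Y \<noteq> {}" and p: "\<And>y. y \<in> Y \<Longrightarrow> 0 \<le> p y" and t: "sum p Y = t"
  shows "- (\<Sum>y\<in>Y. p y * ln (p y / t)) \<le> t * ln (card Y)"
proof (cases "t = 0")
  case True
  then have "\<forall>y\<in>Y. p y = 0" using Y p t sum_nonneg_eq_0_iff by blast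
  then show ?thesis using True by simp
next
  case False
  then have t_pos: "t > 0" using t p sum_nonneg[of Y p] by force
  have card_pos: "card Y > 0" using Y by (simp add: card_gt_0_iff)
  have split: "p y * ln (p y / t) = p y * ln (p y) - p y * ln t" if "y \<in> Y" for y
  proof (cases "p y = 0")
    case False
    then show ?thesis using p[OF that] t_pos by (simp add: ln_div right_diff_distrib)
  qed simp
  have "- (\<Sum>y\<in>Y. p y * ln (p y)) \<le> - (\<Sum>y\<in>Y. p y * ln (t / card Y))"
    using Y(1) p by (rule gibbs_inequality) (use t_pos card_pos t in auto)
  also have "(\<Sum>y\<in>Y. p y * ln (t / card Y)) = t * ln (t / card Y)"
    using t by (simp add: sum_distrib_right[symmetric])
  also have "\<dots> = t * ln t - t * ln (card Y)"
    using t_pos card_pos by (simp add: ln_div right_diff_distrib)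
  finally show ?thesis
    using t by (simp add: split sum_subtractf sum_distrib_right[symmetric])
qed

lemma sum_prod_le_prod_sum_PiE:
  fixes q :: "'i \<Rightarrow> 'l::finite \<Rightarrow> real"
  assumes "finite S" "Y \<subseteq> PiE S (\<lambda>_. UNIV)" "\<And>u v. 0 \<le> q u v"
  shows "(\<Sum>y\<in>Y. \<Prod>u\<in>S. q u (y u)) \<le> (\<Prod>u\<in>S. \<Sum>v\<in>UNIV. q u v)"
proof -
  have "(\<Sum>y\<in>Y. \<Prod>u\<in>S. q u (y u)) \<le> (\<Sum>y\<in>PiE S (\<lambda>_. UNIV). \<Prod>u\<in>S. q u (y u))"
    using assms by (intro sum_mono2) (auto simp: finite_PiE intro: prod_nonneg)
  also have "\<dots> = (\<Prod>u\<in>S. \<Sum>v\<in>UNIV. q u v)"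
    by (rule prod_sum_PiE[symmetric]) (auto simp: assms(1))
  finally show ?thesis .
qed

lemma (in prob_space) sum_prob_fibres:
  assumes "finite Y" "\<And>y. y \<in> Y \<Longrightarrow> f -` {y} \<inter> E \<in> events"
  shows "(\<Sum>y\<in>Y. prob (f -` {y} \<inter> E)) = prob (f -` Y \<inter> E)"
proof -
  have "f -` Y \<inter> E = (\<Union>y\<in>Y. f -` {y} \<inter> E)" by auto
  moreover have "prob (\<Union>y\<in>Y. f -` {y} \<inter> E) = (\<Sum>y\<in>Y. prob (f -` {y} \<inter> E))"
    by (rule finite_measure_finite_Union) (auto simp: assms disjoint_family_on_def)
  ultimately show ?thesis by simp
qed

lemma (in prob_space) sum_prob_fibres_eq_1:
  assumes "finite (f ` space M)" "\<And>y. f -` {y} \<inter> space M \<in> events"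
  shows "(\<Sum>y\<in>f ` space M. prob (f -` {y} \<inter> space M)) = 1"
proof -
  have "f -` f ` space M \<inter> space M = space M" by auto
  then show ?thesis using sum_prob_fibres[OF assms] by (simp add: prob_space)
qed

lemma (in prob_space) sum_prob_fibres_comp:
  fixes h :: "'y \<Rightarrow> 'l::finite"
  assumes fin: "finite (F ` space M)" and meas: "\<And>A. F -` A \<inter> space M \<in> events"
  shows "(\<Sum>y\<in>F ` space M. prob (F -` {y} \<inter> space M) * c (h y))
    = (\<Sum>v\<in>UNIV. prob ((\<lambda>x. h (F x)) -` {v} \<inter> space M) * c v)"
proof -
  have "(\<Sum>y\<in>F ` space M. prob (F -` {y} \<inter> space M) * c (h y))
      = (\<Sum>v\<in>UNIV. \<Sum>y\<in>{y\<in>F ` space M. h y = v}. prob (F -` {y} \<inter> space M) * c (h y))"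
    by (rule sum.group[symmetric]) (auto simp: fin)
  also have "\<dots> = (\<Sum>v\<in>UNIV. (\<Sum>y\<in>{y\<in>F ` space M. h y = v}. prob (F -` {y} \<inter> space M)) * c v)"
    by (simp add: sum_distrib_right)
  also have "\<dots> = (\<Sum>v\<in>UNIV. prob ((\<lambda>x. h (F x)) -` {v} \<inter> space M) * c v)"
  proof (rule sum.cong[OF refl])
    fix v
    have "(\<Sum>y\<in>{y\<in>F ` space M. h y = v}. prob (F -` {y} \<inter> space M))
        = prob (F -` {y\<in>F ` space M. h y = v} \<inter> space M)"
      using fin meas by (intro sum_prob_fibres) auto
    also have "F -` {y\<in>F ` space M. h y = v} \<inter> space M = (\<lambda>x. h (F x)) -` {v} \<inter> space M" by auto
    finally show "(\<Sum>y\<in>{y\<in>F ` space M. h y = v}. prob (F -` {y} \<inter> space M)) * c v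
        = prob ((\<lambda>x. h (F x)) -` {v} \<inter> space M) * c v" by simp
  qed
  finally show ?thesis .
qed

lemma (in prob_space) sum_prob_fibres_card:
  assumes fin: "finite (g ` space M)" "finite G" and meas: "\<And>z. g -` {z} \<inter> space M \<in> events"
  shows "(\<Sum>z\<in>g ` space M. prob (g -` {z} \<inter> space M) * card {u\<in>G. P u z})
    = (\<Sum>u\<in>G. prob {x\<in>space M. P u (g x)})"
proof -
  have "(\<Sum>z\<in>g ` space M. prob (g -` {z} \<inter> space M) * card {u\<in>G. P u z})
      = (\<Sum>z\<in>g ` space M. \<Sum>u\<in>G. if P u z then prob (g -` {z} \<inter> space M) else 0)"
    using fin(2) by (simp add: sum.If_cases sum_distrib_left Int_def mult.commute)
  also have "\<dots> = (\<Sum>u\<in>G. \<Sum>z\<in>{z\<in>g ` space M. P u z}. prob (g -` {z} \<inter> space M))"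
    using fin(1) by (subst sum.swap) (simp add: sum.inter_filter)
  also have "\<dots> = (\<Sum>u\<in>G. prob {x\<in>space M. P u (g x)})"
  proof (rule sum.cong[OF refl])
    fix u
    have "(\<Sum>z\<in>{z\<in>g ` space M. P u z}. prob (g -` {z} \<inter> space M))
        = prob (g -` {z\<in>g ` space M. P u z} \<inter> space M)"
      using fin(1) meas by (intro sum_prob_fibres) auto
    also have "g -` {z\<in>g ` space M. P u z} \<inter> space M = {x\<in>space M. P u (g x)}" by auto
    finally show "(\<Sum>z\<in>{z\<in>g ` space M. P u z}. prob (g -` {z} \<inter> space M))
        = prob {x\<in>space M. P u (g x)}" .
  qed
  finally show ?thesis .
qed

lemma (in prob_space) part_entropy_eq_sum_UNIV:
  fixes f :: "'a \<Rightarrow> 'l::finite"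
  shows "part_entropy M f =
    - (\<Sum>v\<in>UNIV. prob (f -` {v} \<inter> space M) * ln (prob (f -` {v} \<inter> space M)))"
proof -
  have "f -` {v} \<inter> space M = {}" if "v \<notin> f ` space M" for v
    using that by auto
  then show ?thesis
    unfolding part_entropy_def by (subst sum.mono_neutral_left[of UNIV "f ` space M"]) auto
qed

lemma (in prob_space) cond_part_entropy_le_ln_card:
  assumes fin_f: "finite (f ` space M)" and fin_g: "finite (g ` space M)"
    and meas: "\<And>y z. f -` {y} \<inter> (g -` {z} \<inter> space M) \<in> events"
  shows "cond_part_entropy M f g
    \<le> (\<Sum>z\<in>g ` space M. prob (g -` {z} \<inter> space M) * ln (card (f ` (g -` {z} \<inter> space M))))"
proof -
  have "- (\<Sum>y\<in>f ` space M. prob (f -` {y} \<inter> E) * ln (prob (f -` {y} \<inter> E) / prob E))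
        \<le> prob E * ln (card (f ` E))"
    if "z \<in> g ` space M" and E: "E = g -` {z} \<inter> space M" for z E
  proof -
    have sub: "f ` E \<subseteq> f ` space M" using E by auto
    have "(\<Sum>y\<in>f ` space M. prob (f -` {y} \<inter> E) * ln (prob (f -` {y} \<inter> E) / prob E))
        = (\<Sum>y\<in>f ` E. prob (f -` {y} \<inter> E) * ln (prob (f -` {y} \<inter> E) / prob E))"
    proof (rule sum.mono_neutral_right[OF fin_f sub])
      have "f -` {y} \<inter> E = {}" if "y \<notin> f ` E" for y
        using that by auto
      then show "\<forall>y\<in>f ` space M - f ` E. prob (f -` {y} \<inter> E) * ln (prob (f -` {y} \<inter> E) / prob E) = 0"
        by auto
    qed
    moreover have "- (\<Sum>y\<in>f ` E. prob (f -` {y} \<inter> E) * ln (prob (f -` {y} \<inter> E) / prob E))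
        \<le> prob E * ln (card (f ` E))"
    proof (rule entropy_le_ln_card)
      show "finite (f ` E)" using finite_subset[OF sub fin_f] .
      show "f ` E \<noteq> {}" using that by auto
      have "(\<Sum>y\<in>f ` E. prob (f -` {y} \<inter> E)) = prob (f -` f ` E \<inter> E)"
        using \<open>finite (f ` E)\<close> by (rule sum_prob_fibres) (use meas E in auto)
      then show "(\<Sum>y\<in>f ` E. prob (f -` {y} \<inter> E)) = prob E"
        by (simp add: Int_absorb1 subset_vimage_iff)
    qed simp
    ultimately show ?thesis by simp
  qed
  then have "(\<Sum>z\<in>g ` space M. - (\<Sum>y\<in>f ` space M. prob (f -` {y} \<inter> (g -` {z} \<inter> space M)) *
        ln (prob (f -` {y} \<inter> (g -` {z} \<inter> space M)) / prob (g -` {z} \<inter> space M))))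
      \<le> (\<Sum>z\<in>g ` space M. prob (g -` {z} \<inter> space M) * ln (card (f ` (g -` {z} \<inter> space M))))"
    by (intro sum_mono) blast
  then show ?thesis unfolding cond_part_entropy_def by (simp add: Int_assoc sum_negf)
qed

lemma (in prob_space)
  fixes \<phi> :: "'i \<Rightarrow> 'a \<Rightarrow> 'l"
  assumes "u \<in> S" and meas: "\<And>A. (\<lambda>x. restrict (\<lambda>u. \<phi> u x) S) -` A \<inter> space M \<in> events"
  shows events_component: "\<phi> u -` {v} \<inter> space M \<in> events"
    and prob_restrict_fibre_le: "prob ((\<lambda>x. restrict (\<lambda>u. \<phi> u x) S) -` {y} \<inter> space M)
      \<le> prob (\<phi> u -` {y u} \<inter> space M)"
proof -
  have "\<phi> u -` {v} \<inter> space M = (\<lambda>x. restrict (\<lambda>u. \<phi> u x) S) -` {y. y u = v} \<inter> space M" for v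
    using assms(1) by auto
  then show events: "\<phi> u -` {v} \<inter> space M \<in> events" for v using meas by metis
  show "prob ((\<lambda>x. restrict (\<lambda>u. \<phi> u x) S) -` {y} \<inter> space M) \<le> prob (\<phi> u -` {y u} \<inter> space M)"
    using assms(1) events by (intro finite_measure_mono) auto
qed

lemma (in prob_space) cross_entropy_prod_marginals:
  fixes \<phi> :: "'i \<Rightarrow> 'a \<Rightarrow> 'l::finite"
  assumes S: "finite S" and meas: "\<And>A. (\<lambda>x. restrict (\<lambda>u. \<phi> u x) S) -` A \<inter> space M \<in> events"
  defines "F \<equiv> \<lambda>x. restrict (\<lambda>u. \<phi> u x) S" and "q \<equiv> \<lambda>u v. prob (\<phi> u -` {v} \<inter> space M)"
  shows "(\<Sum>y\<in>F ` space M. prob (F -` {y} \<inter> space M) * ln (\<Prod>u\<in>S. q u (y u)))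
    = (\<Sum>u\<in>S. \<Sum>v\<in>UNIV. q u v * ln (q u v))"
proof -
  have fin: "finite (F ` space M)"
    by (rule finite_subset[of _ "PiE S (\<lambda>_. UNIV)"]) (auto simp: F_def S finite_PiE)
  have split: "prob (F -` {y} \<inter> space M) * ln (\<Prod>u\<in>S. q u (y u))
      = (\<Sum>u\<in>S. prob (F -` {y} \<inter> space M) * ln (q u (y u)))" for y
  proof (cases "prob (F -` {y} \<inter> space M) = 0")
    case False
    then have "0 < prob (F -` {y} \<inter> space M)" using measure_nonneg[of M] by (simp add: order_less_le)
    then have "\<forall>u\<in>S. q u (y u) > 0"
      using prob_restrict_fibre_le[OF _ meas, of _ y] unfolding F_def q_def by (meson less_le_trans)
    then have "ln (\<Prod>u\<in>S. q u (y u)) = (\<Sum>u\<in>S. ln (q u (y u)))" by (intro ln_prod S) auto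
    then show ?thesis by (simp add: sum_distrib_left)
  qed simp
  have "(\<Sum>y\<in>F ` space M. prob (F -` {y} \<inter> space M) * ln (q u (y u)))
      = (\<Sum>v\<in>UNIV. q u v * ln (q u v))" if "u \<in> S" for u
    using sum_prob_fibres_comp[OF fin meas[folded F_def], of "\<lambda>v. ln (q u v)" "\<lambda>y. y u"] that
    by (simp add: q_def F_def)
  moreover have "(\<Sum>y\<in>F ` space M. \<Sum>u\<in>S. prob (F -` {y} \<inter> space M) * ln (q u (y u)))
      = (\<Sum>u\<in>S. \<Sum>y\<in>F ` space M. prob (F -` {y} \<inter> space M) * ln (q u (y u)))"
    by (rule sum.swap)
  ultimately show ?thesis by (simp add: split)
qed

lemma (in prob_space) part_entropy_restrict_le_sum:
  fixes \<phi> :: "'i \<Rightarrow> 'a \<Rightarrow> 'l::finite"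
  assumes S: "finite S"
    and meas: "\<And>A. (\<lambda>x. restrict (\<lambda>u. \<phi> u x) S) -` A \<inter> space M \<in> events"
  shows "part_entropy M (\<lambda>x. restrict (\<lambda>u. \<phi> u x) S) \<le> (\<Sum>u\<in>S. part_entropy M (\<phi> u))"
proof -
  define F where "F = (\<lambda>x. restrict (\<lambda>u. \<phi> u x) S)"
  define p where "p = (\<lambda>y. prob (F -` {y} \<inter> space M))"
  define q where "q = (\<lambda>u v. prob (\<phi> u -` {v} \<inter> space M))"
  have fin: "finite (F ` space M)"
    by (rule finite_subset[of _ "PiE S (\<lambda>_. UNIV)"]) (auto simp: F_def S finite_PiE)
  have "(\<Sum>y\<in>F ` space M. \<Prod>u\<in>S. q u (y u)) \<le> (\<Prod>u\<in>S. \<Sum>v\<in>UNIV. q u v)"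
    using S by (rule sum_prod_le_prod_sum_PiE) (auto simp: F_def q_def)
  also have "\<dots> = 1"
  proof (rule prod.neutral, rule ballI)
    fix u assume "u \<in> S"
    then show "(\<Sum>v\<in>UNIV. q u v) = 1"
      using sum_prob_fibres[of UNIV "\<phi> u" "space M"] events_component[OF _ meas]
      by (simp add: q_def prob_space)
  qed
  also have "1 = sum p (F ` space M)"
    unfolding p_def using fin meas by (intro sum_prob_fibres_eq_1[symmetric]) (simp_all add: F_def)
  finally have "- (\<Sum>y\<in>F ` space M. p y * ln (p y)) \<le> - (\<Sum>y\<in>F ` space M. p y * ln (\<Prod>u\<in>S. q u (y u)))"
  proof (rule gibbs_inequality[OF fin, rotated 3])
    show "0 < (\<Prod>u\<in>S. q u (y u))" if "0 < p y" for y
      using prob_restrict_fibre_le[OF _ meas, of _ y] that unfolding p_def q_def F_def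
      by (intro prod_pos) (meson less_le_trans)
  qed (simp_all add: p_def q_def prod_nonneg)
  also have "\<dots> = (\<Sum>u\<in>S. part_entropy M (\<phi> u))"
    using cross_entropy_prod_marginals[OF S meas]
    by (simp add: p_def q_def F_def part_entropy_eq_sum_UNIV sum_negf)
  finally show ?thesis unfolding part_entropy_def p_def F_def .
qed

lemma bin_entropy_nonneg:
  assumes "0 \<le> e" "e \<le> 1"
  shows "0 \<le> bin_entropy e"
proof (cases "e = 0 \<or> e = 1")
  case False
  then have "0 < e" "e < 1" using assms by auto
  then have "e * ln e \<le> 0" "(1 - e) * ln (1 - e) \<le> 0" by (simp_all add: mult_nonneg_nonpos)
  then show ?thesis unfolding bin_entropy_def by simp
qed (auto simp: bin_entropy_def)

lemma bin_entropy_mono: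
  assumes "0 \<le> p" "p \<le> e" "e \<le> 1/2"
  shows "bin_entropy p \<le> bin_entropy e"
proof (cases "p = 0")
  case True
  then show ?thesis using bin_entropy_nonneg[of e] assms by (simp add: bin_entropy_def)
next
  case False
  then have p_pos: "p > 0" using assms by simp
  define h where "h = (\<lambda>x::real. - x * ln x - (1 - x) * ln (1 - x))"
  have "h p \<le> h e"
  proof (rule DERIV_nonneg_imp_nondecreasing[OF assms(2)])
    fix x assume "p \<le> x" "x \<le> e"
    then have x: "0 < x" "x < 1" "x \<le> 1 - x" using p_pos assms by auto
    have "(h has_real_derivative (ln (1 - x) - ln x)) (at x)"
      unfolding h_def using x by (auto intro!: derivative_eq_intros)
    moreover have "0 \<le> ln (1 - x) - ln x" using x by simp
    ultimately show "\<exists>y. (h has_real_derivative y) (at x) \<and> 0 \<le> y" by blast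
  qed
  then show ?thesis using p_pos assms unfolding h_def bin_entropy_def by auto
qed

section \<open>Functions of finitely many coordinates\<close>

lemma finite_box2 [simp]: "finite (box2 a b)"
  by (simp add: box2_def)

definition depends_only_on :: "(int \<times> int) set \<Rightarrow> ('a config \<Rightarrow> 'l) \<Rightarrow> bool" where
  "depends_only_on T f \<longleftrightarrow> (\<forall>x y. (\<forall>v\<in>T. x v = y v) \<longrightarrow> f x = f y)"

lemma depends_only_on_cyl: "depends_only_on (box2 1 (int R)) (\<lambda>x. x \<in> cyl R W)"
  unfolding depends_only_on_def cyl_def
proof (intro allI impI)
  fix x y :: "'a config"
  assume "\<forall>v\<in>box2 1 (int R). x v = y v"
  then have "restrict x (box2 1 (int R)) = restrict y (box2 1 (int R))" by (intro restrict_ext) simp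
  then show "(x \<in> {x. restrict x (box2 1 (int R)) \<in> W}) = (y \<in> {x. restrict x (box2 1 (int R)) \<in> W})"
    by simp
qed

lemma depends_only_on_join_part:
  assumes "depends_only_on T f" "\<And>u v. u \<in> S \<Longrightarrow> v \<in> T \<Longrightarrow> vadd u v \<in> T'"
  shows "depends_only_on T' (join_part f S)"
  unfolding depends_only_on_def join_part_def
proof (intro allI impI)
  fix x y :: "'a config"
  assume xy: "\<forall>v\<in>T'. x v = y v"
  have "f (shift u x) = f (shift u y)" if "u \<in> S" for u
  proof -
    have "\<forall>v\<in>T. shift u x v = shift u y v" using xy assms(2) that by (simp add: shift_def)
    then show ?thesis using assms(1) unfolding depends_only_on_def by blast
  qed
  then show "restrict (\<lambda>u. f (shift u x)) S = restrict (\<lambda>u. f (shift u y)) S"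
    by (rule restrict_ext)
qed

lemma finite_range_join_part:
  fixes f :: "'a config \<Rightarrow> 'l::finite"
  assumes "finite S"
  shows "finite (join_part f S ` X)"
proof (rule finite_subset)
  show "join_part f S ` X \<subseteq> PiE S (\<lambda>_. UNIV)" by (auto simp: join_part_def)
  show "finite (PiE S (\<lambda>_. UNIV :: 'l set))" using assms by (simp add: finite_PiE)
qed

lemma space_full_shift: "space full_shift = UNIV"
  unfolding full_shift_def by (simp add: space_PiM)

lemma vimage_in_sets_full_shift:
  fixes f :: "'a::finite config \<Rightarrow> 'l"
  assumes T: "finite T" and f: "depends_only_on T f"
  shows "f -` A \<in> sets full_shift"
proof -
  define W where "W = (\<lambda>x. restrict x T) ` (f -` A)"
  have "W \<subseteq> PiE T (\<lambda>_. UNIV)" unfolding W_def by auto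
  then have fin_W: "finite W" by (rule finite_subset) (simp add: finite_PiE T)
  have "f -` A = (\<Union>w\<in>W. {x. \<forall>v\<in>T. x v = w v})"
  proof (intro equalityI subsetI)
    fix x assume "x \<in> f -` A"
    then show "x \<in> (\<Union>w\<in>W. {x. \<forall>v\<in>T. x v = w v})" unfolding W_def by force
  next
    fix x assume "x \<in> (\<Union>w\<in>W. {x. \<forall>v\<in>T. x v = w v})"
    then obtain y where "f y \<in> A" "\<forall>v\<in>T. x v = y v" unfolding W_def by auto
    then show "x \<in> f -` A" using f unfolding depends_only_on_def by (metis vimageI)
  qed
  moreover have "{x. \<forall>v\<in>T. x v = w v} \<in> sets full_shift" for w :: "'a config"
  proof (cases "T = {}")
    case True
    then show ?thesis using sets.top[of full_shift] by (simp add: space_full_shift)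
  next
    case False
    have "{x \<in> space full_shift. x v \<in> {w v}} \<in> sets full_shift" for v
      unfolding full_shift_def by (rule sets_Collect_single) auto
    then have "(\<Inter>v\<in>T. {x \<in> space full_shift. x v \<in> {w v}}) \<in> sets full_shift"
      by (intro sets.finite_INT T False)
    moreover have "(\<Inter>v\<in>T. {x \<in> space full_shift. x v \<in> {w v}}) = {x. \<forall>v\<in>T. x v = w v}"
      using False by (auto simp: space_full_shift)
    ultimately show ?thesis by simp
  qed
  ultimately show ?thesis by (auto intro: sets.finite_UN fin_W)
qed

section \<open>Counting patterns that are aligned in blocks\<close>

text \<open>
  Blocks are the squares \<open>u + [1, R]\<^sup>2\<close> with \<open>u \<in> (R\<int>)\<^sup>2\<close>; \<open>block_corner R s\<close> is the corner of the block
  containing \<open>s\<close>. The blocks inside \<open>[1, n]\<^sup>2\<close> have their corners in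
  \<open>block_offsets R n \<times> block_offsets R n\<close> and leave uncovered a strip of width \<open>< R\<close> along the
  two far sides.
\<close>

definition block_offsets :: "nat \<Rightarrow> nat \<Rightarrow> int set" where
  "block_offsets R n = {l \<in> {0..int n - int R}. int R dvd l}"

lemma card_block_offsets:
  assumes "1 \<le> R"
  shows "R * card (block_offsets R n) \<le> n"
proof -
  have "block_offsets R n \<subseteq> (\<lambda>j. int R * j) ` {0..<int (n div R)}"
  proof
    fix l assume "l \<in> block_offsets R n"
    then obtain j where l: "l = int R * j" "0 \<le> l" "l \<le> int n - int R"
      unfolding block_offsets_def by (auto elim!: dvdE)
    then have "0 \<le> j" using assms by (simp add: zero_le_mult_iff)
    moreover have "(int R * (j + 1)) div int R \<le> int n div int R"
      using l assms by (intro zdiv_mono1) (auto simp: algebra_simps)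
    ultimately show "l \<in> (\<lambda>j. int R * j) ` {0..<int (n div R)}"
      using l assms by (auto simp: zdiv_int)
  qed
  then have "card (block_offsets R n) \<le> card ((\<lambda>j. int R * j) ` {0..<int (n div R)})"
    by (intro card_mono) auto
  also have "\<dots> \<le> n div R"
    using card_image_le[of "{0..<int (n div R)}" "\<lambda>j. int R * j"] by simp
  finally have "R * card (block_offsets R n) \<le> R * (n div R)" by simp
  also have "\<dots> \<le> n" by simp
  finally show ?thesis .
qed

lemma card_block_offsets_sq_le:
  assumes "1 \<le> R"
  shows "real R ^ 2 * card (block_offsets R n \<times> block_offsets R n) \<le> real n ^ 2"
proof -
  have "real R * card (block_offsets R n) \<le> n"
    using card_block_offsets[OF assms] by (metis of_nat_le_iff of_nat_mult)
  then have "(real R * card (block_offsets R n)) ^ 2 \<le> real n ^ 2"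
    by (rule power_mono) simp
  then show ?thesis by (simp add: card_cartesian_product power2_eq_square mult_ac)
qed

definition block_corner :: "nat \<Rightarrow> int \<times> int \<Rightarrow> int \<times> int" where
  "block_corner R s = (int R * ((fst s - 1) div int R), int R * ((snd s - 1) div int R))"

lemma block_corner_offset:
  fixes a :: int
  assumes "1 \<le> R" "1 \<le> a"
  shows "0 \<le> int R * ((a - 1) div int R)" "a - int R * ((a - 1) div int R) \<in> {1..int R}"
proof -
  have "a - 1 - int R * ((a - 1) div int R) = (a - 1) mod int R"
    by (simp add: minus_mult_div_eq_mod)
  moreover have "0 \<le> (a - 1) mod int R" "(a - 1) mod int R < int R" using assms by auto
  ultimately show "a - int R * ((a - 1) div int R) \<in> {1..int R}" by auto
  show "0 \<le> int R * ((a - 1) div int R)" using assms by (simp add: pos_imp_zdiv_nonneg_iff)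
qed

lemma block_corner_bounds:
  assumes "1 \<le> R" "s \<in> box2 1 (int n)"
  shows "0 \<le> fst (block_corner R s)" "0 \<le> snd (block_corner R s)"
    and "fst s - fst (block_corner R s) \<in> {1..int R}" "snd s - snd (block_corner R s) \<in> {1..int R}"
  using assms block_corner_offset[of R "fst s"] block_corner_offset[of R "snd s"]
  by (auto simp: block_corner_def box2_def mem_Times_iff)

lemma block_corner_in_block_offsets:
  assumes "block_corner R s \<in> box2 0 (int n - int R)"
  shows "block_corner R s \<in> block_offsets R n \<times> block_offsets R n"
  using assms unfolding block_offsets_def box2_def block_corner_def by (auto simp: mem_Times_iff)

text \<open>
  \<open>z u\<close> marks the blocks in which the pattern is known to be aligned; there a site is
  represented by the site of its column in the bottom row of the block.
\<close>

definition column_rep :: "nat \<Rightarrow> nat \<Rightarrow> (int \<times> int \<Rightarrow> bool) \<Rightarrow> int \<times> int \<Rightarrow> int \<times> int" where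
  "column_rep R n z s =
    (let u = block_corner R s in if u \<in> box2 0 (int n - int R) \<and> z u then (fst s, snd u + 1) else s)"

lemma column_rep_in_box2:
  assumes "1 \<le> R" "s \<in> box2 1 (int n)"
  shows "column_rep R n z s \<in> box2 1 (int n)"
  using assms block_corner_bounds[OF assms]
  by (auto simp: column_rep_def Let_def box2_def mem_Times_iff)

lemma column_rep_aligned:
  assumes R: "1 \<le> R" and s: "s \<in> box2 1 (int n)"
    and aligned: "\<And>u i j. u \<in> box2 0 (int n - int R) \<Longrightarrow> z u \<Longrightarrow> i \<in> {1..int R} \<Longrightarrow> j \<in> {1..int R}
      \<Longrightarrow> h (fst u + i, snd u + j) = h (fst u + i, snd u + 1)"
  shows "h (column_rep R n z s) = h s"
proof (cases "block_corner R s \<in> box2 0 (int n - int R) \<and> z (block_corner R s)")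
  case True
  define u where "u = block_corner R s"
  have "h (fst u + (fst s - fst u), snd u + (snd s - snd u)) = h (fst u + (fst s - fst u), snd u + 1)"
    using True block_corner_bounds[OF R s] unfolding u_def by (intro aligned) auto
  then show ?thesis using True by (simp add: column_rep_def u_def)
qed (auto simp: column_rep_def Let_def)

lemma column_rep_image_subset:
  assumes R: "1 \<le> R"
  shows "column_rep R n z ` box2 1 (int n) \<subseteq>
    {1..int n} \<times> (\<lambda>l. l + 1) ` block_offsets R n
    \<union> (\<Union>u\<in>{u \<in> block_offsets R n \<times> block_offsets R n. \<not> z u}.
          {fst u + 1..fst u + int R} \<times> {snd u + 1..snd u + int R})
    \<union> ({int n - int R + 2..int n} \<times> {1..int n} \<union> {1..int n} \<times> {int n - int R + 2..int n})"
proof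
  fix c assume "c \<in> column_rep R n z ` box2 1 (int n)"
  then obtain s where s: "s \<in> box2 1 (int n)" and c: "c = column_rep R n z s" by auto
  define u where "u = block_corner R s"
  note bounds = block_corner_bounds[OF R s, folded u_def]
  consider (good) "u \<in> box2 0 (int n - int R)" "z u" | (bad) "u \<in> box2 0 (int n - int R)" "\<not> z u"
    | (border) "u \<notin> box2 0 (int n - int R)" by blast
  then show "c \<in> {1..int n} \<times> (\<lambda>l. l + 1) ` block_offsets R n
    \<union> (\<Union>u\<in>{u \<in> block_offsets R n \<times> block_offsets R n. \<not> z u}.
          {fst u + 1..fst u + int R} \<times> {snd u + 1..snd u + int R})
    \<union> ({int n - int R + 2..int n} \<times> {1..int n} \<union> {1..int n} \<times> {int n - int R + 2..int n})"
  proof cases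
    case good
    then have "c = (fst s, snd u + 1)" "snd u \<in> block_offsets R n"
      using block_corner_in_block_offsets[of R s n] by (auto simp: c column_rep_def u_def mem_Times_iff)
    then show ?thesis using s by (auto simp: box2_def mem_Times_iff)
  next
    case bad
    then have "c = s" "u \<in> block_offsets R n \<times> block_offsets R n"
      using block_corner_in_block_offsets[of R s n] by (auto simp: c column_rep_def u_def)
    moreover have "s \<in> {fst u + 1..fst u + int R} \<times> {snd u + 1..snd u + int R}"
      using bounds by (auto simp: mem_Times_iff)
    ultimately show ?thesis using bad(2) by blast
  next
    case border
    then have "c = s" by (simp add: c column_rep_def u_def)
    then show ?thesis using border bounds s by (auto simp: box2_def mem_Times_iff)
  qed
qed

lemma finite_block_offsets: "finite (block_offsets R n)"
  unfolding block_offsets_def by (rule finite_subset[of _ "{0..int n - int R}"]) auto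

lemma card_blocks_le:
  assumes "finite U"
  shows "card (\<Union>u\<in>U. {fst u + 1..fst u + int R} \<times> {snd u + 1..snd u + int R}) \<le> card U * R ^ 2"
proof -
  have "card (\<Union>u\<in>U. {fst u + 1..fst u + int R} \<times> {snd u + 1..snd u + int R})
      \<le> (\<Sum>u\<in>U. card ({fst u + 1..fst u + int R} \<times> {snd u + 1..snd u + int R}))"
    using assms by (rule card_UN_le)
  then show ?thesis by (simp add: card_cartesian_product power2_eq_square)
qed

lemma card_far_strips_le:
  assumes "1 \<le> R"
  shows "card ({int n - int R + 2..int n} \<times> {1..int n} \<union> {1..int n} \<times> {int n - int R + 2..int n})
    \<le> 2 * R * n"
proof -
  have "card ({int n - int R + 2..int n} \<times> {1..int n} \<union> {1..int n} \<times> {int n - int R + 2..int n})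
      \<le> card ({int n - int R + 2..int n} \<times> {1..int n}) + card ({1..int n} \<times> {int n - int R + 2..int n})"
    by (rule card_Un_le)
  also have "\<dots> = (R - 1) * n + n * (R - 1)"
    using assms by (simp add: card_cartesian_product nat_diff_distrib)
  also have "\<dots> \<le> 2 * R * n" by (simp add: algebra_simps)
  finally show ?thesis .
qed

lemma card_column_rep_image_le:
  assumes R: "1 \<le> R"
  shows "real (card (column_rep R n z ` box2 1 (int n)))
    \<le> real n ^ 2 / R + real R ^ 2 * card {u \<in> block_offsets R n \<times> block_offsets R n. \<not> z u} + 2 * real R * real n"
proof -
  define B where "B = block_offsets R n"
  define bad where "bad = {u \<in> B \<times> B. \<not> z u}"
  define C1 where "C1 = {1..int n} \<times> (\<lambda>l. l + 1) ` B"
  define C2 where "C2 = (\<Union>u\<in>bad. {fst u + 1..fst u + int R} \<times> {snd u + 1..snd u + int R})"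
  define C3 where "C3 = {int n - int R + 2..int n} \<times> {1..int n} \<union> {1..int n} \<times> {int n - int R + 2..int n}"
  have fin_bad: "finite bad" unfolding bad_def B_def using finite_block_offsets by simp
  have "finite (C1 \<union> C2 \<union> C3)"
    unfolding C1_def C2_def C3_def B_def using finite_block_offsets fin_bad by auto
  moreover have "column_rep R n z ` box2 1 (int n) \<subseteq> C1 \<union> C2 \<union> C3"
    using column_rep_image_subset[OF R, of n z] unfolding C1_def C2_def C3_def bad_def B_def .
  ultimately have "card (column_rep R n z ` box2 1 (int n)) \<le> card (C1 \<union> C2 \<union> C3)"
    by (rule card_mono)
  also have "\<dots> \<le> card C1 + card C2 + card C3"
    by (meson card_Un_le add_right_mono order_trans)
  finally have "real (card (column_rep R n z ` box2 1 (int n))) \<le> card C1 + card C2 + card C3"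
    by (simp flip: of_nat_add)
  moreover have "real (card C1) = real n * card B"
    unfolding C1_def by (simp add: card_cartesian_product card_image inj_on_def)
  moreover have "card C2 \<le> card bad * R ^ 2"
    unfolding C2_def by (rule card_blocks_le[OF fin_bad])
  then have "real (card C2) \<le> real R ^ 2 * card bad"
    using of_nat_mono[of "card C2" "card bad * R ^ 2"] by (simp add: mult.commute)
  moreover have "card C3 \<le> 2 * R * n"
    unfolding C3_def by (rule card_far_strips_le[OF R])
  then have "real (card C3) \<le> 2 * real R * real n"
    using of_nat_mono[of "card C3" "2 * R * n"] by simp
  moreover have "real n * card B \<le> real n ^ 2 / R"
  proof -
    have "real R * card B \<le> n" using card_block_offsets[OF R, of n] unfolding B_def
      by (metis of_nat_le_iff of_nat_mult)
    then have "real n * (real R * card B) \<le> real n * n" by (simp add: mult_left_mono)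
    then show ?thesis using R by (simp add: field_simps power2_eq_square)
  qed
  ultimately show ?thesis unfolding bad_def B_def by linarith
qed

lemma card_le_power_card_image:
  fixes Y :: "('i \<Rightarrow> 'b::finite) set"
  assumes S: "finite S" and ext: "Y \<subseteq> extensional S"
    and rep: "\<And>y s. y \<in> Y \<Longrightarrow> s \<in> S \<Longrightarrow> y s = y (rep s)"
  shows "card Y \<le> CARD('b) ^ card (rep ` S)"
proof -
  have "inj_on (\<lambda>y. restrict y (rep ` S)) Y"
  proof (rule inj_onI)
    fix y y' assume y: "y \<in> Y" "y' \<in> Y" and eq: "restrict y (rep ` S) = restrict y' (rep ` S)"
    have "y s = y' s" if "s \<in> S" for s
      using rep[OF y(1) that] rep[OF y(2) that] fun_cong[OF eq, of "rep s"] that by simp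
    then show "y = y'" by (rule extensionalityI[of _ S, rotated 2]) (use ext y in auto)
  qed
  moreover have "(\<lambda>y. restrict y (rep ` S)) ` Y \<subseteq> PiE (rep ` S) (\<lambda>_. UNIV)" by auto
  ultimately have "card Y \<le> card (PiE (rep ` S) (\<lambda>_. UNIV :: 'b set))"
    using S by (intro card_inj_on_le) (auto simp: finite_PiE)
  then show ?thesis using S by (simp add: card_PiE)
qed

lemma ln_card_le_card_mult_ln:
  assumes "card Y \<le> CARD('b::finite) ^ m"
  shows "ln (card Y) \<le> m * ln CARD('b)"
proof (cases "card Y = 0")
  case False
  then have "ln (card Y) \<le> ln (real (CARD('b) ^ m))"
    using assms by (subst ln_le_cancel_iff) auto
  then show ?thesis by (simp add: ln_realpow)
qed simp

lemma ln_card_aligned_patterns_le: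
  fixes h :: "'c \<Rightarrow> int \<times> int \<Rightarrow> 'b::finite"
  assumes R: "1 \<le> R"
    and aligned: "\<And>x u i j. x \<in> X \<Longrightarrow> u \<in> box2 0 (int n - int R) \<Longrightarrow> z u
      \<Longrightarrow> i \<in> {1..int R} \<Longrightarrow> j \<in> {1..int R} \<Longrightarrow> h x (fst u + i, snd u + j) = h x (fst u + i, snd u + 1)"
  shows "ln (card ((\<lambda>x. restrict (h x) (box2 1 (int n))) ` X)) \<le> ln CARD('b) *
    (real n ^ 2 / R + real R ^ 2 * card {u \<in> block_offsets R n \<times> block_offsets R n. \<not> z u} + 2 * real R * real n)"
proof -
  have "card ((\<lambda>x. restrict (h x) (box2 1 (int n))) ` X) \<le> CARD('b) ^ card (column_rep R n z ` box2 1 (int n))"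
  proof (rule card_le_power_card_image)
    show "finite (box2 1 (int n))" by (simp add: box2_def)
    show "(\<lambda>x. restrict (h x) (box2 1 (int n))) ` X \<subseteq> extensional (box2 1 (int n))" by auto
    fix y s assume "y \<in> (\<lambda>x. restrict (h x) (box2 1 (int n))) ` X" and s: "s \<in> box2 1 (int n)"
    then obtain x where x: "x \<in> X" and y: "y = restrict (h x) (box2 1 (int n))" by blast
    have "h x (column_rep R n z s) = h x s"
      using R s by (rule column_rep_aligned) (rule aligned[OF x])
    then show "y s = y (column_rep R n z s)"
      using column_rep_in_box2[OF R s] s by (simp add: y)
  qed
  then have "ln (card ((\<lambda>x. restrict (h x) (box2 1 (int n))) ` X))
      \<le> card (column_rep R n z ` box2 1 (int n)) * ln CARD('b)"
    by (rule ln_card_le_card_mult_ln)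
  also have "\<dots> \<le> (real n ^ 2 / R + real R ^ 2 * card {u \<in> block_offsets R n \<times> block_offsets R n. \<not> z u}
      + 2 * real R * real n) * ln CARD('b)"
    using card_column_rep_image_le[OF R] by (rule mult_right_mono) simp
  finally show ?thesis by (simp add: mult.commute)
qed

lemma ln_card_patterns_given_join_part_le:
  fixes \<pi> :: "'a \<Rightarrow> 'b::finite"
  assumes R: "1 \<le> R"
    and aligned: "\<And>x i j. x \<in> A \<Longrightarrow> i \<in> {1..int R} \<Longrightarrow> j \<in> {1..int R} \<Longrightarrow> \<pi> (x (i, j)) = \<pi> (x (i, 1))"
  shows "ln (card (join_part (\<lambda>x. \<pi> (x (0, 0))) (box2 1 (int n))
      ` (join_part (\<lambda>x. x \<in> A) (box2 0 (int n - int R)) -` {z} \<inter> X)))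
    \<le> ln CARD('b) * (real n ^ 2 / R
      + real R ^ 2 * card {u \<in> block_offsets R n \<times> block_offsets R n. \<not> z u} + 2 * real R * real n)"
proof -
  have pattern: "join_part (\<lambda>x. \<pi> (x (0, 0))) (box2 1 (int n))
      = (\<lambda>x. restrict (\<lambda>s. \<pi> (x s)) (box2 1 (int n)))"
    unfolding join_part_def shift_def vadd_def by simp
  have block_aligned: "\<pi> (x (fst u + i, snd u + j)) = \<pi> (x (fst u + i, snd u + 1))"
    if "x \<in> join_part (\<lambda>x. x \<in> A) (box2 0 (int n - int R)) -` {z} \<inter> X" "u \<in> box2 0 (int n - int R)" "z u"
      and ij: "i \<in> {1..int R}" "j \<in> {1..int R}" for x u i j
  proof -
    have "shift u x \<in> A" using that(1-3) by (auto simp: join_part_def)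
    then show ?thesis using aligned[OF _ ij, of "shift u x"] by (simp add: shift_def vadd_def)
  qed
  show ?thesis
    unfolding pattern by (rule ln_card_aligned_patterns_le[where h = "\<lambda>x s. \<pi> (x s)", OF R block_aligned])
qed

section \<open>Shift-invariant measures\<close>

lemma limsup_div_square_le:
  assumes "\<And>n. N \<le> n \<Longrightarrow> h n \<le> c * real n ^ 2"
  shows "limsup (\<lambda>n. ereal (h n / real n ^ 2)) \<le> ereal c"
proof (rule Limsup_bounded)
  have "h n / real n ^ 2 \<le> c" if "max N 1 \<le> n" for n
    using assms[of n] that by (simp add: divide_le_eq)
  then show "\<forall>\<^sub>F n in sequentially. ereal (h n / real n ^ 2) \<le> ereal c"
    unfolding eventually_sequentially by (intro exI[of _ "max N 1"]) auto
qed

locale shift_invariant_prob = prob_space M for M :: "'a::finite config measure" +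
  assumes sets_eq_full_shift: "sets M = sets full_shift"
    and invariant: "shift_invariant M"
begin

lemma space_eq_UNIV: "space M = UNIV"
  using sets_eq_imp_space_eq[OF sets_eq_full_shift] by (simp add: space_full_shift)

lemma events_if_depends_only_on:
  assumes "finite T" "depends_only_on T f"
  shows "f -` A \<inter> space M \<in> events"
  using vimage_in_sets_full_shift[OF assms] sets_eq_full_shift by (simp add: space_eq_UNIV)

lemma prob_shift_vimage:
  assumes "A \<in> events"
  shows "prob (shift u -` A \<inter> space M) = prob A"
  using invariant assms unfolding shift_invariant_def measure_def by (metis surj_pair)

lemma part_entropy_shift:
  fixes f :: "'a config \<Rightarrow> 'l::finite"
  assumes "\<And>A. f -` A \<inter> space M \<in> events"
  shows "part_entropy M (\<lambda>x. f (shift u x)) = part_entropy M f"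
proof -
  have "prob ((\<lambda>x. f (shift u x)) -` {v} \<inter> space M) = prob (f -` {v} \<inter> space M)" for v
  proof -
    have "(\<lambda>x. f (shift u x)) -` {v} \<inter> space M = shift u -` (f -` {v} \<inter> space M) \<inter> space M"
      by (auto simp: space_eq_UNIV)
    then show ?thesis by (simp only: prob_shift_vimage[OF assms])
  qed
  then show ?thesis by (simp add: part_entropy_eq_sum_UNIV)
qed

lemma events_join_part:
  assumes "finite T" "depends_only_on T f" "finite S"
  shows "join_part f S -` C \<inter> space M \<in> events"
proof -
  have "depends_only_on (\<Union>u\<in>S. vadd u ` T) (join_part f S)"
    using assms(2) by (rule depends_only_on_join_part) auto
  then show ?thesis using assms(1,3) by (intro events_if_depends_only_on) auto
qed

lemma event_if_depends_only_on:
  assumes "finite T" "depends_only_on T (\<lambda>x. x \<in> A)"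
  shows "A \<in> events"
  using events_if_depends_only_on[OF assms, of "{True}"] by (simp add: space_eq_UNIV vimage_def)

lemma part_entropy_join_part_le:
  fixes f :: "'a config \<Rightarrow> 'l::finite"
  assumes T: "finite T" "depends_only_on T f" and S: "finite S"
  shows "part_entropy M (join_part f S) \<le> card S * part_entropy M f"
proof -
  have "join_part f S = (\<lambda>x. restrict (\<lambda>u. f (shift u x)) S)"
    by (rule ext) (simp add: join_part_def)
  then have "(\<lambda>x. restrict (\<lambda>u. f (shift u x)) S) -` C \<inter> space M \<in> events" for C
    using events_join_part[OF T S] by metis
  then have "part_entropy M (join_part f S) \<le> (\<Sum>u\<in>S. part_entropy M (\<lambda>x. f (shift u x)))"
    unfolding join_part_def using S by (intro part_entropy_restrict_le_sum)
  also have "\<dots> = card S * part_entropy M f"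
    using events_if_depends_only_on[OF T] by (simp add: part_entropy_shift)
  finally show ?thesis .
qed

lemma part_entropy_indicator:
  assumes "A \<in> events"
  shows "part_entropy M (\<lambda>x. x \<in> A) = bin_entropy (prob (space M - A))"
proof -
  have "(\<lambda>x. x \<in> A) -` {True} \<inter> space M = A" "(\<lambda>x. x \<in> A) -` {False} \<inter> space M = space M - A"
    using sets.sets_into_space[OF assms] by auto
  moreover have "prob A = 1 - prob (space M - A)" using prob_compl[OF assms] by simp
  ultimately show ?thesis
    by (simp add: part_entropy_eq_sum_UNIV UNIV_bool bin_entropy_def)
qed

lemma part_entropy_join_indicator_le:
  assumes T: "finite T" "depends_only_on T (\<lambda>x. x \<in> A)" and S: "finite S"
    and \<epsilon>: "prob (space M - A) \<le> \<epsilon>" "\<epsilon> \<le> 1/2"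
  shows "part_entropy M (join_part (\<lambda>x. x \<in> A) S) \<le> card S * bin_entropy \<epsilon>"
proof -
  have "bin_entropy (prob (space M - A)) \<le> bin_entropy \<epsilon>"
    using \<epsilon> by (intro bin_entropy_mono) auto
  then show ?thesis
    using part_entropy_join_part_le[OF T S] event_if_depends_only_on[OF T]
    by (simp add: part_entropy_indicator mult_left_mono order_trans)
qed

lemma sum_prob_join_part_card_false:
  assumes T: "finite T" "depends_only_on T (\<lambda>x. x \<in> A)" and S: "finite S" "B \<subseteq> S"
  shows "(\<Sum>z\<in>join_part (\<lambda>x. x \<in> A) S ` space M.
      prob (join_part (\<lambda>x. x \<in> A) S -` {z} \<inter> space M) * card {u \<in> B. \<not> z u})
    = card B * prob (space M - A)"
proof -
  have "prob {x \<in> space M. \<not> join_part (\<lambda>x. x \<in> A) S x u} = prob (space M - A)" if "u \<in> B" for u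
  proof -
    have "{x \<in> space M. \<not> join_part (\<lambda>x. x \<in> A) S x u} = shift u -` (space M - A) \<inter> space M"
      using S(2) that by (auto simp: join_part_def space_eq_UNIV)
    then show ?thesis using prob_shift_vimage event_if_depends_only_on[OF T] by auto
  qed
  moreover have "finite B" using S by (rule finite_subset[rotated])
  ultimately show ?thesis
    using sum_prob_fibres_card[OF finite_range_join_part[OF S(1)] _ events_join_part[OF T S(1)],
        of B "\<lambda>u z. \<not> z u"]
    by simp
qed

lemma cond_part_entropy_aligned_le:
  fixes \<pi> :: "'a \<Rightarrow> 'b::finite"
  assumes R: "1 \<le> R" and A: "depends_only_on (box2 1 (int R)) (\<lambda>x. x \<in> A)"
    and aligned: "\<And>x i j. x \<in> A \<Longrightarrow> i \<in> {1..int R} \<Longrightarrow> j \<in> {1..int R} \<Longrightarrow> \<pi> (x (i, j)) = \<pi> (x (i, 1))"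
  shows "cond_part_entropy M (join_part (\<lambda>x. \<pi> (x (0, 0))) (box2 1 (int n)))
      (join_part (\<lambda>x. x \<in> A) (box2 0 (int n - int R)))
    \<le> ln CARD('b) * (real n ^ 2 / R + real n ^ 2 * prob (space M - A) + 2 * real R * real n)"
proof -
  define S where "S = box2 0 (int n - int R)"
  define f where "f = join_part (\<lambda>x. \<pi> (x (0, 0))) (box2 1 (int n))"
  define g where "g = join_part (\<lambda>x. x \<in> A) S"
  define B where "B = block_offsets R n \<times> block_offsets R n"
  define L where "L = ln CARD('b)"
  define P where "P = (\<lambda>z. prob (g -` {z} \<inter> space M))"
  have fin_S: "finite S" by (simp add: S_def box2_def)
  have fin_g: "finite (g ` space M)" unfolding g_def using fin_S by (rule finite_range_join_part)
  have "depends_only_on (box2 1 (int n)) f"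
    unfolding f_def by (rule depends_only_on_join_part[where T = "{(0, 0)}"]) (auto simp: depends_only_on_def vadd_def)
  moreover have "depends_only_on (box2 1 (int n)) g"
    unfolding g_def using A by (rule depends_only_on_join_part) (auto simp: S_def box2_def vadd_def mem_Times_iff)
  ultimately have "(\<lambda>x. (f x, g x)) -` {(y, z)} \<inter> space M \<in> events" for y z
    by (intro events_if_depends_only_on[of "box2 1 (int n)"]) (auto simp: box2_def depends_only_on_def)
  then have "cond_part_entropy M f g \<le> (\<Sum>z\<in>g ` space M. P z * ln (card (f ` (g -` {z} \<inter> space M))))"
    unfolding P_def f_def
    by (intro cond_part_entropy_le_ln_card finite_range_join_part fin_g) (simp_all add: box2_def vimage_def Int_def conj_ac)
  also have "\<dots> \<le> (\<Sum>z\<in>g ` space M. P z * (L * (real n ^ 2 / R + real R ^ 2 * card {u \<in> B. \<not> z u} + 2 * real R * real n)))"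
    unfolding f_def g_def S_def L_def B_def P_def
    by (intro sum_mono mult_left_mono ln_card_patterns_given_join_part_le[OF R aligned]) simp_all
  also have "\<dots> = L * (real n ^ 2 / R + 2 * real R * real n) * (\<Sum>z\<in>g ` space M. P z)
      + L * real R ^ 2 * (\<Sum>z\<in>g ` space M. P z * card {u \<in> B. \<not> z u})"
  proof -
    have "P z * (L * (real n ^ 2 / R + real R ^ 2 * card {u \<in> B. \<not> z u} + 2 * real R * real n))
        = L * (real n ^ 2 / R + 2 * real R * real n) * P z + L * real R ^ 2 * (P z * card {u \<in> B. \<not> z u})"
      for z by (simp add: algebra_simps)
    then show ?thesis by (simp add: sum.distrib sum_distrib_left)
  qed
  also have "(\<Sum>z\<in>g ` space M. P z) = 1"
    unfolding P_def using fin_g by (rule sum_prob_fibres_eq_1) (simp add: g_def events_join_part[OF _ A fin_S])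
  also have "(\<Sum>z\<in>g ` space M. P z * card {u \<in> B. \<not> z u}) = card B * prob (space M - A)"
    unfolding P_def g_def B_def
    by (rule sum_prob_join_part_card_false[OF _ A fin_S]) (auto simp: S_def block_offsets_def box2_def)
  also have "L * (real n ^ 2 / R + 2 * real R * real n) * 1 + L * real R ^ 2 * (card B * prob (space M - A))
      \<le> L * (real n ^ 2 / R + 2 * real R * real n) + L * (real n ^ 2 * prob (space M - A))"
  proof -
    have "real R ^ 2 * card B * prob (space M - A) \<le> real n ^ 2 * prob (space M - A)"
      unfolding B_def using card_block_offsets_sq_le[OF R] by (rule mult_right_mono) simp
    then show ?thesis by (simp add: L_def mult_left_mono mult.assoc)
  qed
  finally show ?thesis
    unfolding f_def g_def S_def L_def by (simp add: algebra_simps)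
qed

lemma limsup_part_entropy_join_indicator_le:
  assumes R: "1 \<le> R" and A: "depends_only_on (box2 1 (int R)) (\<lambda>x. x \<in> A)"
    and \<epsilon>: "0 \<le> \<epsilon>" "\<epsilon> \<le> 1/2" "prob (space M - A) \<le> \<epsilon>"
  shows "limsup (\<lambda>n. ereal (part_entropy M (join_part (\<lambda>x. x \<in> A) (box2 0 (int n - int R))) / (real n)^2))
    \<le> ereal (bin_entropy \<epsilon>)"
proof (rule limsup_div_square_le)
  fix n :: nat
  have "card (box2 0 (int n - int R)) \<le> n ^ 2"
    using R by (simp add: box2_def card_cartesian_product power2_eq_square mult_le_mono)
  then have "real (card (box2 0 (int n - int R))) * bin_entropy \<epsilon> \<le> bin_entropy \<epsilon> * real n ^ 2"
    using \<epsilon> by (subst mult.commute, intro mult_right_mono bin_entropy_nonneg) (auto simp flip: of_nat_power)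
  moreover have "part_entropy M (join_part (\<lambda>x. x \<in> A) (box2 0 (int n - int R)))
      \<le> card (box2 0 (int n - int R)) * bin_entropy \<epsilon>"
    by (rule part_entropy_join_indicator_le[OF _ A _ \<epsilon>(3,2)]) (simp_all add: box2_def)
  ultimately show "part_entropy M (join_part (\<lambda>x. x \<in> A) (box2 0 (int n - int R)))
      \<le> bin_entropy \<epsilon> * real n ^ 2"
    by linarith
qed

lemma limsup_cond_part_entropy_aligned_le:
  fixes \<pi> :: "'a \<Rightarrow> 'b::finite"
  assumes R: "1 \<le> R" and A: "depends_only_on (box2 1 (int R)) (\<lambda>x. x \<in> A)"
    and aligned: "\<And>x i j. x \<in> A \<Longrightarrow> i \<in> {1..int R} \<Longrightarrow> j \<in> {1..int R} \<Longrightarrow> \<pi> (x (i, j)) = \<pi> (x (i, 1))"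
    and \<epsilon>: "prob (space M - A) \<le> \<epsilon>"
  shows "limsup (\<lambda>n. ereal (cond_part_entropy M (join_part (\<lambda>x. \<pi> (x (0, 0))) (box2 1 (int n)))
      (join_part (\<lambda>x. x \<in> A) (box2 0 (int n - int R))) / (real n)^2))
    \<le> ereal ((8 / real R + \<epsilon>) * ln CARD('b))"
proof (rule limsup_div_square_le[where N = "R * R"])
  fix n :: nat assume "R * R \<le> n"
  then have "real R * real R * real n \<le> real n * real n"
    by (intro mult_right_mono) (simp_all flip: of_nat_mult)
  moreover have "0 \<le> real n * real n" by simp
  ultimately have "2 * (real R * real R * real n) \<le> 7 * (real n * real n)" by linarith
  then have "2 * real R * real n * real R \<le> 7 * real n ^ 2" by (simp add: power2_eq_square mult_ac)
  then have "2 * real R * real n \<le> 7 * real n ^ 2 / R"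
    using R by (simp add: pos_le_divide_eq power2_eq_square)
  moreover have "real n ^ 2 * prob (space M - A) \<le> real n ^ 2 * \<epsilon>"
    using \<epsilon> by (rule mult_left_mono) simp
  ultimately have "real n ^ 2 / R + real n ^ 2 * prob (space M - A) + 2 * real R * real n
      \<le> (8 / real R + \<epsilon>) * real n ^ 2"
    by (simp add: field_simps)
  then have "ln CARD('b) * (real n ^ 2 / R + real n ^ 2 * prob (space M - A) + 2 * real R * real n)
      \<le> ln CARD('b) * ((8 / real R + \<epsilon>) * real n ^ 2)"
    by (rule mult_left_mono) simp
  with cond_part_entropy_aligned_le[where \<pi> = \<pi> and n = n, OF R A aligned]
  show "cond_part_entropy M (join_part (\<lambda>x. \<pi> (x (0, 0))) (box2 1 (int n)))
      (join_part (\<lambda>x. x \<in> A) (box2 0 (int n - int R))) \<le> (8 / real R + \<epsilon>) * ln CARD('b) * real n ^ 2"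
    by (simp add: ac_simps)
qed

end

theorem lemma2p4:
  fixes \<pi> :: "'a::finite \<Rightarrow> 'b::finite"
    and D R :: nat and F M :: "'a config set"
    and \<mu> :: "'a config measure" and \<epsilon> :: real
  assumes D: "D \<ge> 1" and RD: "R \<ge> D"
    and F: "F \<subseteq> patterns D"
    and M: "M = {w. locally_admissible F D R w}"
    and valign: "\<forall>w \<in> M. \<forall>i \<in> {1..int R}. \<forall>j \<in> {1..int R}. \<forall>j' \<in> {1..int R}.
                   \<pi> (w (i, j)) = \<pi> (w (i, j'))"
    and prob: "prob_space \<mu>" and sets_mu: "sets \<mu> = sets full_shift"
    and inv: "shift_invariant \<mu>" and erg: "ergodic \<mu>"
    and eps: "0 \<le> \<epsilon>" "\<epsilon> \<le> 1/2"
    and small: "measure \<mu> (space \<mu> - cyl R M) \<le> \<epsilon>"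
  shows "limsup (\<lambda>n::nat. ereal (part_entropy \<mu>
            (join_part (\<lambda>x. x \<in> cyl R M) (box2 0 (int n - int R))) / (real n)^2))
           \<le> ereal (bin_entropy \<epsilon>) \<and>
         limsup (\<lambda>n::nat. ereal (cond_part_entropy \<mu>
            (join_part (\<lambda>x. \<pi> (x (0,0))) (box2 1 (int n)))
            (join_part (\<lambda>x. x \<in> cyl R M) (box2 0 (int n - int R))) / (real n)^2))
           \<le> ereal ((8 / real R + \<epsilon>) * ln (real CARD('b)))"
proof -
  interpret shift_invariant_prob \<mu>
    using prob sets_mu inv by (simp add: shift_invariant_prob_def shift_invariant_prob_axioms_def)
  have R: "1 \<le> R" using D RD by simp
  have aligned: "\<pi> (x (i, j)) = \<pi> (x (i, 1))"
    if x: "x \<in> cyl R M" and ij: "i \<in> {1..int R}" "j \<in> {1..int R}" for x i j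
  proof -
    have "restrict x (box2 1 (int R)) \<in> M" using x by (simp add: cyl_def)
    moreover have one: "1 \<in> {1..int R}" using R by simp
    ultimately have "\<pi> (restrict x (box2 1 (int R)) (i, j)) = \<pi> (restrict x (box2 1 (int R)) (i, 1))"
      using valign ij by blast
    then show ?thesis using ij one by (simp add: box2_def)
  qed
  show ?thesis
    using limsup_part_entropy_join_indicator_le[OF R depends_only_on_cyl eps small]
      limsup_cond_part_entropy_aligned_le[where \<pi> = \<pi>, OF R depends_only_on_cyl aligned small]
    by simp
qed

end
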